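(* Consider the GVIO system (visual–inertial navigation with raw GNSS from a single constellation) with state $\chi=(\mathbf{T}_i^w,{}^w\mathbf{v}_i,\mathbf{T}_{c_m}^w,{}^w\mathbf{p}_{f_j})$ (IMU pose $\mathbf{T}_i^w=(\mathbf{R}_i^w,{}^w\mathbf{p}_i)\in\mathbb{SE}(3)$, IMU velocity ${}^w\mathbf{v}_i\in\mathbb{R}^3$, cloned camera poses $\mathbf{T}_{c_m}^w\in\mathbb{SE}(3)$, landmark positions ${}^w\mathbf{p}_{f_j}\in\mathbb{R}^3$), process model $$\dot{\mathbf{T}}_i^w=\mathbf{T}_i^w\mathbf{U},\quad {}^w\dot{\mathbf{v}}_i=\mathbf{R}_i^w\tilde{\mathbf{a}}+{}^w\mathbf{g},\quad \dot{\mathbf{T}}_{c_m}^w=0,\quad {}^w\dot{\mathbf{p}}_{f_j}=0,\qquad \mathbf{U}=\begin{bmatrix}\tilde{\boldsymbol{\omega}}^\times & (\mathbf{R}_i^{w})^T{}^w\mathbf{v}_i\\ 0^T&0\end{bmatrix},$$ visual measurements $\mathbf{r}_j^{(m)}=\pi((\mathbf{T}_{c_m}^w)^{-1}{}^w\mathbf{p}_{f_j})$ with $\pi(x_1,x_2,x_3)=(x_1/x_3,x_2/x_3)^T$, and single-differenced GNSS measurements between satellites $k$ and $l$ $$\tilde\rho^{kl}=\|\mathbf{T}_w^{\mathrm{ECEF}}{}^w\mathbf{p}_i-\mathbf{p}^k_{sat}\|-\|\mathbf{T}_w^{\mathrm{ECEF}}{}^w\mathbf{p}_i-\mathbf{p}^l_{sat}\|,\qquad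 \tilde{\dot\rho}^{kl}=-\mathbf{n}_k^T\mathbf{R}_w^{\mathrm{ECEF}}{}^w\mathbf{v}_i+\mathbf{n}_l^T\mathbf{R}_w^{\mathrm{ECEF}}{}^w\mathbf{v}_i,$$ where the unit vectors $\mathbf{n}_k$ are treated as constant. Suppose $N$ satellites are observed, and let $\mathbf{N}_g$ be the matrix whose rows are $(\mathbf{n}_j-\mathbf{n}_{j-1})^T\mathbf{R}_w^{\mathrm{ECEF}}$, $j=2,\dots,N$. If $\dim\operatorname{null}(\mathbf{N}_g)>0$, then the GVIO system has infinitesimal symmetries, i.e. it is infinitesimally invariant under the (restricted) left action of a group $H$. Moreover, if ${}^w\mathbf{g}^\times{}^w\mathbf{p}_i\in\operatorname{null}(\mathbf{N}_g)$ and ${}^w\mathbf{g}^\times{}^w\mathbf{v}_i\in\operatorname{null}(\mathbf{N}_g)$, then $H=\mathbb{SO}_g(2)\ltimes\operatorname{null}(\mathbf{N}_g)$; otherwise $H=\operatorname{null}(\mathbf{N}_g)$ (translations).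
   Context: Notation: $\mathbf{x}^\times$ is the skew-symmetric matrix of $\mathbf{x}\in\mathbb{R}^3$. $\tilde{\boldsymbol\omega},\tilde{\mathbf a}$ are the (unbiased) angular rate and acceleration inputs; ${}^w\mathbf g$ is gravity in the world frame. $\mathbf{T}_w^{\mathrm{ECEF}}\in\mathbb{SE}(3)$ and its rotation $\mathbf{R}_w^{\mathrm{ECEF}}$ are known constants; $\mathbf{p}^k_{sat}$ is the position of satellite $k$ in ECEF and $\mathbf{n}_k$ is the unit vector from the receiver to satellite $k$. $\mathbb{SO}_g(2)$ denotes rotations about the direction of ${}^w\mathbf g$, and $S=\mathbb{SO}_g(2)\ltimes\mathbb{R}^3\subset\mathbb{SE}(3)$. The left action of $\mathbf{T}_S=(\mathbf{R}_S,\mathbf{p}_S)\in S$ on the state is $\mathbf{T}_S\rhd\chi=(\mathbf{T}_S^{-1}\mathbf{T}_i^w,\ \mathbf{R}_S^{-1}{}^w\mathbf{v}_i,\ \mathbf{T}_S^{-1}\mathbf{T}_{c_m}^w,\ \mathbf{T}_S^{-1}{}^w\mathbf{p}_{f_j})$; subgroups $H\subseteq S$ act by restriction (here $\operatorname{null}(\mathbf N_g)\subseteq\mathbb{R}^3$ is viewed as a group of translations). Definition (infinitesimal invariance): a system with state $\chi_t$ on a Lie group $G$, dynamics $\dot\chi_t=f(\chi_t,u_t)$ and discrete observations $y_{t_k}=h(\chi_{t_k})$ is infinitesimally invariant under a left action $\rhd$ of a group $S$ on $G$ if for all $s\in S$, $\rhd_{s*}(\dot\chi_t)=f(s\rhd\chi_t,u_t)$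 (where $\rhd_{s*}$ is the push-forward on tangent bundles) and $\frac{\partial}{\partial s}\big|_{s=\mathrm{id}_S}h(s\rhd\chi_{t_k})=0$, the latter meaning $\frac{d}{d\lambda}\big|_{\lambda=0}h(\exp(\lambda A)\rhd\chi_{t_k})=0$ for all $A$ in the Lie algebra; i.e. observations are unchanged to first order under the action. *)

theory Defs
  imports "HOL-Analysis.Analysis"
begin

text \<open>Skew-symmetric matrix of x: the matrix whose j-th column is x cross e_j,
  so that (skew x) *v y = x cross y.\<close>
definition skew :: "real^3 \<Rightarrow> real^3^3" where
  "skew x = (\<chi> i j. (cross3 x (axis j 1)) $ i)"

text \<open>Elements of SE(3) as pairs (R, p) with R a rotation matrix. The ambient
  space real^3^3 * real^3 is used for tangent vectors.\<close>
type_synonym pose = "(real^3^3) \<times> (real^3)"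

definition SE3 :: "pose set" where
  "SE3 = {(R, p). rotation_matrix R}"

definition pose_mult :: "pose \<Rightarrow> pose \<Rightarrow> pose" where
  "pose_mult T1 T2 = (fst T1 ** fst T2, fst T1 *v snd T2 + snd T1)"

definition pose_inv :: "pose \<Rightarrow> pose" where
  "pose_inv T = (transpose (fst T), - (transpose (fst T) *v snd T))"

definition pose_apply :: "pose \<Rightarrow> real^3 \<Rightarrow> real^3" where
  "pose_apply T x = fst T *v x + snd T"

definition pose_id :: pose where
  "pose_id = (mat 1, 0)"

definition SOg2 :: "real^3 \<Rightarrow> (real^3^3) set" where
  "SOg2 g = {R. rotation_matrix R \<and> R *v g = g}"

text \<open>One-parameter subgroups of a subgroup H: continuous homomorphisms
  gamma : R -> H; these are exactly the curves lambda |-> exp(lambda A), A in Lie(H).\<close>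
definition one_param_subgroup ::
  "('s \<Rightarrow> 's \<Rightarrow> 's) \<Rightarrow> 's set \<Rightarrow> (real \<Rightarrow> 's::topological_space) \<Rightarrow> bool" where
  "one_param_subgroup gmult H \<gamma> \<longleftrightarrow>
     (\<forall>t. \<gamma> t \<in> H) \<and> (\<forall>a b. \<gamma> (a + b) = gmult (\<gamma> a) (\<gamma> b)) \<and> continuous_on UNIV \<gamma>"

text \<open>The push-forward of a tangent vector under
  the (ambient, smooth) map act s is its Frechet derivative.\<close>
definition inf_invariant ::
  "('x::real_normed_vector \<Rightarrow> 'u \<Rightarrow> 'x) \<Rightarrow> 'i set \<Rightarrow> ('i \<Rightarrow> 'x \<Rightarrow> real) \<Rightarrow>
   ('s::topological_space \<Rightarrow> 'x \<Rightarrow> 'x) \<Rightarrow> ('s \<Rightarrow> 's \<Rightarrow> 's) \<Rightarrow> 's set \<Rightarrow> 'x set \<Rightarrow> 'x \<Rightarrow> bool" where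
  "inf_invariant f I h act gmult H G x0 \<longleftrightarrow>
     (\<forall>s\<in>H. \<forall>x\<in>G. \<forall>u. \<exists>D. (act s has_derivative D) (at x) \<and> D (f x u) = f (act s x) u) \<and>
     (\<forall>\<gamma>. one_param_subgroup gmult H \<gamma> \<longrightarrow>
        (\<forall>i\<in>I. ((\<lambda>t. h i (act (\<gamma> t) x0)) has_real_derivative 0) (at 0)))"

text \<open>State: IMU pose, IMU velocity, cloned camera poses (index type 'c),
  landmark positions (index type 'f).\<close>
type_synonym ('c, 'f) gvio_state = "pose \<times> (real^3) \<times> (pose^'c) \<times> ((real^3)^'f)"

definition gvio_states :: "('c::finite, 'f::finite) gvio_state set" where
  "gvio_states = {(Ti, v, Tc, pf). Ti \<in> SE3 \<and> (\<forall>m. Tc $ m \<in> SE3)}"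

definition gvio_f :: "real^3 \<Rightarrow> ('c::finite, 'f::finite) gvio_state \<Rightarrow> (real^3) \<times> (real^3)
    \<Rightarrow> ('c, 'f) gvio_state" where
  "gvio_f g x u = (case x of (Ti, v, Tc, pf) \<Rightarrow> case u of (\<omega>, a) \<Rightarrow>
     ((fst Ti ** skew \<omega>, fst Ti *v (transpose (fst Ti) *v v)),
      fst Ti *v a + g, 0, 0))"

definition gvio_act :: "pose \<Rightarrow> ('c::finite, 'f::finite) gvio_state \<Rightarrow> ('c, 'f) gvio_state" where
  "gvio_act S x = (case x of (Ti, v, Tc, pf) \<Rightarrow>
     (pose_mult (pose_inv S) Ti, transpose (fst S) *v v,
      (\<chi> m. pose_mult (pose_inv S) (Tc $ m)), (\<chi> j. pose_apply (pose_inv S) (pf $ j))))"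

definition proj :: "real^3 \<Rightarrow> real \<times> real" where
  "proj x = (x$1 / x$3, x$2 / x$3)"

datatype ('c, 'f) gvio_obs = VisX 'c 'f | VisY 'c 'f | PR nat nat | Dop nat nat

definition gvio_obs_set :: "nat \<Rightarrow> ('c, 'f) gvio_obs set" where
  "gvio_obs_set N = range (\<lambda>(m, j). VisX m j) \<union> range (\<lambda>(m, j). VisY m j)
     \<union> {PR k l | k l. k \<in> {1..N} \<and> l \<in> {1..N}} \<union> {Dop k l | k l. k \<in> {1..N} \<and> l \<in> {1..N}}"

text \<open>T_w^ECEF = (RE, pE); psat k: satellite positions in ECEF; n k: the (constant)
  unit vectors used in the Doppler model.\<close>
definition gvio_h :: "real^3^3 \<Rightarrow> real^3 \<Rightarrow> (nat \<Rightarrow> real^3) \<Rightarrow> (nat \<Rightarrow> real^3) \<Rightarrow>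
    ('c, 'f) gvio_obs \<Rightarrow> ('c::finite, 'f::finite) gvio_state \<Rightarrow> real" where
  "gvio_h RE pE psat n ob x = (case x of (Ti, v, Tc, pf) \<Rightarrow> (case ob of
      VisX m j \<Rightarrow> fst (proj (pose_apply (pose_inv (Tc $ m)) (pf $ j)))
    | VisY m j \<Rightarrow> snd (proj (pose_apply (pose_inv (Tc $ m)) (pf $ j)))
    | PR k l \<Rightarrow> norm (pose_apply (RE, pE) (snd Ti) - psat k)
                - norm (pose_apply (RE, pE) (snd Ti) - psat l)
    | Dop k l \<Rightarrow> - (n k \<bullet> (RE *v v)) + n l \<bullet> (RE *v v)))"

definition null_Ng :: "real^3^3 \<Rightarrow> (nat \<Rightarrow> real^3) \<Rightarrow> nat \<Rightarrow> (real^3) set" where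
  "null_Ng RE n N = {t. \<forall>j\<in>{2..N}. (n j - n (j - 1)) \<bullet> (RE *v t) = 0}"

definition SOg2_semidir_null :: "real^3 \<Rightarrow> (real^3) set \<Rightarrow> pose set" where
  "SOg2_semidir_null g V = {(R, p). R \<in> SOg2 g \<and> p \<in> V}"

definition translation_group :: "(real^3) set \<Rightarrow> pose set" where
  "translation_group V = {(mat 1, p) | p. p \<in> V}"

end

theory Submission
  imports Defs
begin

(*
  The candidate group H is a subgroup of SO_g(2) x| null(N_g).  Every element (R, p) of
  it acts on the state affinely, with linear part "multiply by R^T", and this commutes
  with the process model precisely because R fixes the gravity vector.

  For the observations, differentiate along a continuous one-parameter subgroup
  t |-> (R t, p t).  Such a subgroup is automatically differentiable: R t is a window
  integral of R times a fixed inverse matrix, the integral of R over a short interval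
  being invertible, and p is then handled in the same way.  Its generator (Omega, b)
  has b in null(N_g), and Omega is a multiple of the skew matrix of g, since R t fixes g
  (Omega = 0 for pure translations).  The visual measurements are invariant under every
  rigid motion.  To first order the IMU position and velocity move by -(Omega p_i + b)
  and -Omega v_i, both in null(N_g) by hypothesis.  A range difference
  |X - p_k| - |X - p_l| changes along X' by (n_l - n_k)^T RE X', and so does the
  Doppler difference along the velocity.  Both vanish on null(N_g), which is exactly
  the joint kernel of the rows (n_j - n_(j-1))^T RE.
*)

section \<open>Regularity of continuous one-parameter subgroups\<close>

lemma bounded_linear_matrix_vector_mult_left: "bounded_linear (\<lambda>A::real^'n^'m. A *v x)"
proof -
  have "linear (\<lambda>A::real^'n^'m. A *v x)"
    by (rule linearI)
      (simp_all add: vec_eq_iff matrix_vector_mult_def sum.distrib sum_distrib_left algebra_simps)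
  then show ?thesis by (simp add: linear_conv_bounded_linear)
qed

lemma bounded_linear_matrix_mult_left: "bounded_linear (\<lambda>A::real^'n^'m. A ** (B::real^'k^'n))"
proof -
  have "linear (\<lambda>A::real^'n^'m. A ** B)"
    by (rule linearI)
      (simp_all add: vec_eq_iff matrix_matrix_mult_def sum.distrib sum_distrib_left algebra_simps)
  then show ?thesis by (simp add: linear_conv_bounded_linear)
qed

lemma bounded_linear_matrix_mult_right: "bounded_linear (\<lambda>B::real^'k^'n. (A::real^'n^'m) ** B)"
proof -
  have "linear (\<lambda>B::real^'k^'n. A ** B)"
    by (rule linearI)
      (simp_all add: vec_eq_iff matrix_matrix_mult_def sum.distrib sum_distrib_left algebra_simps)
  then show ?thesis by (simp add: linear_conv_bounded_linear)
qed

lemma integral_has_vector_derivative_at: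
  fixes f :: "real \<Rightarrow> 'a::banach"
  assumes f: "continuous_on UNIV f" and "a < u"
  shows "((\<lambda>u. integral {a..u} f) has_vector_derivative f u) (at u)"
proof -
  have "((\<lambda>u. integral {a..u} f) has_vector_derivative f u) (at u within {a..u + 1})"
    using \<open>a < u\<close> by (intro integral_has_vector_derivative continuous_on_subset[OF f]) auto
  moreover have "at u within {a..u + 1} = at u"
    using \<open>a < u\<close> by (intro at_within_interior) simp
  ultimately show ?thesis by simp
qed

lemma integral_window_has_vector_derivative:
  fixes f :: "real \<Rightarrow> 'a::banach"
  assumes f: "continuous_on UNIV f" and "0 \<le> \<delta>"
  shows "((\<lambda>t. integral {t..t + \<delta>} f) has_vector_derivative f (t0 + \<delta>) - f t0) (at t0)"
proof -
  define a where "a = t0 - 1"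
  define F where "F = (\<lambda>u. integral {a..u} f)"
  have dF: "(F has_vector_derivative f u) (at u)" if "a < u" for u
    unfolding F_def using f that by (rule integral_has_vector_derivative_at)
  have "((\<lambda>t. t + \<delta>) has_vector_derivative 1) (at t0)"
    by (auto intro!: derivative_eq_intros)
  moreover have "(F has_vector_derivative f (t0 + \<delta>)) (at (t0 + \<delta>))"
    using \<open>0 \<le> \<delta>\<close> by (intro dF) (simp add: a_def)
  ultimately have "((\<lambda>t. F (t + \<delta>)) has_vector_derivative f (t0 + \<delta>)) (at t0)"
    using vector_diff_chain_at[of "\<lambda>t. t + \<delta>" 1 t0 F] by (simp add: o_def)
  then have "((\<lambda>t. F (t + \<delta>) - F t) has_vector_derivative f (t0 + \<delta>) - f t0) (at t0)"
    using dF[of t0] by (intro has_vector_derivative_diff) (auto simp: a_def)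
  then show ?thesis
  proof (rule has_vector_derivative_transform_within_open[where S = "{a<..}"])
    fix t assume "t \<in> {a<..}"
    then show "F (t + \<delta>) - F t = integral {t..t + \<delta>} f"
      unfolding F_def using \<open>0 \<le> \<delta>\<close>
      by (subst Henstock_Kurzweil_Integration.integral_combine[symmetric, of a t "t + \<delta>"])
         (auto intro: integrable_continuous_interval continuous_on_subset[OF f])
  qed (auto simp: a_def)
qed

lemma integral_near_identity_invertible:
  fixes R :: "real \<Rightarrow> real^'n^'n"
  assumes cR: "continuous_on UNIV R" and R0: "R 0 = mat 1"
  obtains \<delta> where "\<delta> > 0" "invertible (integral {0..\<delta>} R)"
proof -
  let ?S = "\<lambda>s. \<Sum>i\<in>UNIV. \<Sum>j\<in>UNIV. \<bar>(R s - mat 1) $ i $ j\<bar>"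
  have "(R \<longlongrightarrow> R 0) (at 0)" using cR by (simp add: continuous_on_def)
  then have "(?S \<longlongrightarrow> ?S 0) (at 0)" by (intro tendsto_intros)
  then have "\<forall>\<^sub>F s in at 0. ?S s < 1/2" by (rule order_tendstoD) (simp add: R0)
  then obtain d where "d > 0" and d: "\<And>s. s \<noteq> 0 \<Longrightarrow> \<bar>s\<bar> < d \<Longrightarrow> ?S s < 1/2"
    by (auto simp: eventually_at dist_real_def)
  define \<delta> where "\<delta> = d / 2"
  have "\<delta> > 0" using \<open>d > 0\<close> by (simp add: \<delta>_def)
  have close: "norm (x - R s *v x) \<le> norm x / 2" if s: "s \<in> {0..\<delta>}" for s x
  proof -
    have "?S s \<le> 1/2"
    proof (cases "s = 0")
      case False
      then show ?thesis using d[of s] s \<open>d > 0\<close> by (simp add: \<delta>_def)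
    qed (simp add: R0)
    have "norm (x - R s *v x) = norm ((R s - mat 1) *v x)"
      by (simp add: matrix_vector_mult_diff_rdistrib norm_minus_commute)
    also have "\<dots> \<le> onorm ((*v) (R s - mat 1)) * norm x"
      by (rule onorm) (rule matrix_vector_mul_bounded_linear)
    also have "\<dots> \<le> ?S s * norm x"
      by (rule mult_right_mono[OF onorm_le_matrix_component_sum]) simp
    also have "\<dots> \<le> 1/2 * norm x"
      by (rule mult_right_mono[OF \<open>?S s \<le> 1/2\<close> norm_ge_zero])
    finally show ?thesis by simp
  qed
  define M where "M = integral {0..\<delta>} R"
  have "(R has_integral M) {0..\<delta>}"
    unfolding M_def by (intro integrable_integral integrable_continuous_interval continuous_on_subset[OF cR]) simp
  have "x = 0" if "M *v x = 0" for x
  proof -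
    have "((\<lambda>s. R s *v x) has_integral M *v x) {0..\<delta>}"
      using has_integral_linear[OF \<open>(R has_integral M) {0..\<delta>}\<close> bounded_linear_matrix_vector_mult_left]
      by (simp add: o_def)
    then have "((\<lambda>s. R s *v x) has_integral 0) {0..\<delta>}" using that by simp
    from has_integral_diff[OF has_integral_const_real[of x 0 \<delta>] this]
    have int: "((\<lambda>s. x - R s *v x) has_integral \<delta> *\<^sub>R x) {0..\<delta>}"
      using \<open>\<delta> > 0\<close> by simp
    have "norm (\<delta> *\<^sub>R x) \<le> norm x / 2 * Henstock_Kurzweil_Integration.content {0..\<delta>}"
    proof (rule has_integral_bound_real[where S = "{}", OF _ _ int])
      fix s assume "s \<in> {0..\<delta>} - {}"
      then show "norm (x - R s *v x) \<le> norm x / 2" by (intro close) simp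
    qed simp_all
    then show "x = 0" using \<open>\<delta> > 0\<close> by simp
  qed
  then have "inj ((*v) M)" by (simp add: vec.inj_iff_eq_0)
  then have "invertible M"
    by (simp add: invertible_left_inverse matrix_left_invertible_injective[symmetric])
  with \<open>\<delta> > 0\<close> show ?thesis using that by (simp add: M_def)
qed

lemma one_param_matrix_group_has_derivative:
  fixes R :: "real \<Rightarrow> real^'n^'n"
  assumes cR: "continuous_on UNIV R" and hom: "\<And>a b. R (a + b) = R a ** R b"
    and R0: "R 0 = mat 1"
  obtains \<Omega> where "(R has_vector_derivative \<Omega>) (at 0)"
proof -
  obtain \<delta> where "\<delta> > 0" and "invertible (integral {0..\<delta>} R)"
    using integral_near_identity_invertible[OF cR R0] .
  then obtain M' where M': "integral {0..\<delta>} R ** M' = mat 1"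
    by (auto simp: invertible_def)
  have int: "(R has_integral integral {0..\<delta>} R) {0..\<delta>}"
    by (intro integrable_integral integrable_continuous_interval continuous_on_subset[OF cR]) simp
  have window: "integral {t..t + \<delta>} R = R t ** integral {0..\<delta>} R" for t
  proof -
    have "((\<lambda>s. R t ** R s) has_integral R t ** integral {0..\<delta>} R) {0..\<delta>}"
      using has_integral_linear[OF int bounded_linear_matrix_mult_right] by (simp add: o_def)
    then have "integral {0..\<delta>} (R \<circ> (+) t) = R t ** integral {0..\<delta>} R"
      by (simp add: o_def hom integral_unique)
    then show ?thesis by (simp add: integral_shift_Icc_real add.commute)
  qed
  have "R t = integral {t..t + \<delta>} R ** M'" for t
    by (simp add: window matrix_mul_assoc[symmetric] M' matrix_mul_rid)
  then have "(\<lambda>t. integral {t..t + \<delta>} R ** M') = R" by auto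
  moreover have "((\<lambda>t. integral {t..t + \<delta>} R ** M') has_vector_derivative
      (R \<delta> - R 0) ** M') (at 0)"
    using bounded_linear.has_vector_derivative[OF bounded_linear_matrix_mult_left
        integral_window_has_vector_derivative[OF cR less_imp_le[OF \<open>\<delta> > 0\<close>], of 0]]
    by simp
  ultimately have "(R has_vector_derivative (R \<delta> - R 0) ** M') (at 0)" by simp
  then show ?thesis by (rule that)
qed

lemma affine_cocycle_has_derivative:
  fixes R :: "real \<Rightarrow> real^'n^'n" and p :: "real \<Rightarrow> real^'n"
  assumes cp: "continuous_on UNIV p" and dR: "(R has_vector_derivative \<Omega>) (at 0)"
    and cocycle: "\<And>a b. p (a + b) = R a *v p b + p a"
  shows "(p has_vector_derivative p 1 - p 0 - \<Omega> *v integral {0..1} p) (at 0)"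
proof -
  define P where "P = integral {0..1} p"
  have window: "integral {t..t + 1} p = R t *v P + p t" for t
  proof -
    have "(p has_integral P) {0..1}"
      unfolding P_def
      by (intro integrable_integral integrable_continuous_interval continuous_on_subset[OF cp]) simp
    then have "((\<lambda>s. R t *v p s + p t) has_integral R t *v P + p t) {0..1}"
      using has_integral_add[OF has_integral_linear[OF _ matrix_vector_mul_bounded_linear]
          has_integral_const_real[of "p t" 0 1]]
      by (simp add: o_def)
    then have "integral {0..1} (p \<circ> (+) t) = R t *v P + p t"
      by (simp add: o_def cocycle integral_unique)
    then show ?thesis by (simp add: integral_shift_Icc_real add.commute)
  qed
  then have "(\<lambda>t. integral {t..t + 1} p - R t *v P) = p" by auto
  moreover have "((\<lambda>t. integral {t..t + 1} p - R t *v P) has_vector_derivative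
      p 1 - p 0 - \<Omega> *v P) (at 0)"
    using has_vector_derivative_diff[OF integral_window_has_vector_derivative[OF cp, of 1 0]
        bounded_linear.has_vector_derivative[OF bounded_linear_matrix_vector_mult_left[of P] dR]]
    by simp
  ultimately show ?thesis by (simp add: P_def)
qed

lemma has_vector_derivative_mirror:
  assumes "(f has_vector_derivative f') (at (- x))"
  shows "((\<lambda>t. f (- t)) has_vector_derivative - f') (at x)"
proof -
  have "((\<lambda>t. - t) has_vector_derivative - 1) (at x)"
    by (auto intro!: derivative_eq_intros)
  from vector_diff_chain_at[OF this] assms show ?thesis by (simp add: o_def)
qed

lemma norm_curve_has_real_derivative:
  fixes z :: "real \<Rightarrow> 'a::real_inner"
  assumes dz: "(z has_vector_derivative z') (at x)" and "z x \<noteq> 0"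
  shows "((\<lambda>t. norm (z t)) has_real_derivative z' \<bullet> sgn (z x)) (at x)"
proof -
  have "((\<lambda>t. norm (z t)) has_derivative (\<lambda>h. (h *\<^sub>R z') \<bullet> sgn (z x))) (at x)"
    using has_derivative_compose[OF dz[unfolded has_vector_derivative_def]
        has_derivative_norm[OF \<open>z x \<noteq> 0\<close>]] .
  moreover have "(\<lambda>h. (h *\<^sub>R z') \<bullet> sgn (z x)) = (*) (z' \<bullet> sgn (z x))"
    by (auto simp: fun_eq_iff)
  ultimately show ?thesis by (simp add: has_field_derivative_def)
qed

lemma one_param_subgroup_SE3_zero:
  assumes op: "one_param_subgroup pose_mult H \<gamma>" and H: "H \<subseteq> SE3"
  shows "\<gamma> 0 = pose_id"
proof -
  obtain R p where \<gamma>0: "\<gamma> 0 = (R, p)" by force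
  have "\<gamma> 0 = pose_mult (\<gamma> 0) (\<gamma> 0)"
    using op unfolding one_param_subgroup_def by (metis add_0)
  then have idem: "R ** R = R" "R *v p + p = p" by (simp_all add: \<gamma>0 pose_mult_def)
  have "\<gamma> 0 \<in> SE3" using op H by (auto simp: one_param_subgroup_def)
  then have "transpose R ** R = mat 1"
    by (simp add: \<gamma>0 SE3_def rotation_matrix_def orthogonal_matrix_def)
  then have "R = mat 1"
    by (metis idem(1) matrix_mul_assoc matrix_mul_lid)
  with idem(2) show ?thesis by (simp add: \<gamma>0 pose_id_def)
qed

lemma one_param_subgroup_SE3_inverse:
  assumes op: "one_param_subgroup pose_mult H \<gamma>" and H: "H \<subseteq> SE3"
  shows "pose_inv (\<gamma> t) = \<gamma> (- t)"
proof -
  obtain R p R' p' where \<gamma>: "\<gamma> t = (R, p)" "\<gamma> (- t) = (R', p')" by force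
  have "pose_mult (\<gamma> t) (\<gamma> (- t)) = pose_id"
    using op one_param_subgroup_SE3_zero[OF op H] unfolding one_param_subgroup_def
    by (metis add.right_inverse)
  then have inv: "R ** R' = mat 1" "R *v p' + p = 0" by (simp_all add: \<gamma> pose_mult_def pose_id_def)
  have "\<gamma> t \<in> SE3" using op H by (auto simp: one_param_subgroup_def)
  then have TR: "transpose R ** R = mat 1"
    by (simp add: \<gamma> SE3_def rotation_matrix_def orthogonal_matrix_def)
  then have R': "R' = transpose R"
    by (metis inv(1) matrix_mul_assoc matrix_mul_lid matrix_mul_rid)
  from inv(2) have "R *v p' = - p" by (simp add: eq_neg_iff_add_eq_0)
  then have "transpose R *v (R *v p') = transpose R *v (- p)" by (rule arg_cong)
  then have "p' = - (transpose R *v p)"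
    by (simp add: matrix_vector_mul_assoc TR vec.neg
        del: transpose_matrix_vector)
  with R' show ?thesis by (simp add: \<gamma> pose_inv_def)
qed

lemma one_param_subgroup_SE3_has_derivative:
  assumes op: "one_param_subgroup pose_mult H \<gamma>" and H: "H \<subseteq> SE3"
  obtains \<Omega> b where "((\<lambda>t. fst (\<gamma> t)) has_vector_derivative \<Omega>) (at 0)"
    and "((\<lambda>t. snd (\<gamma> t)) has_vector_derivative b) (at 0)"
proof -
  have hom: "\<gamma> (a + b) = pose_mult (\<gamma> a) (\<gamma> b)" and cont: "continuous_on UNIV \<gamma>" for a b
    using op by (simp_all add: one_param_subgroup_def)
  have "fst (\<gamma> 0) = mat 1" using one_param_subgroup_SE3_zero[OF op H] by (simp add: pose_id_def)
  then obtain \<Omega> where dR: "((\<lambda>t. fst (\<gamma> t)) has_vector_derivative \<Omega>) (at 0)"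
    using one_param_matrix_group_has_derivative[OF continuous_on_fst[OF cont]] hom
    by (metis fst_conv pose_mult_def)
  have "((\<lambda>t. snd (\<gamma> t)) has_vector_derivative
      snd (\<gamma> 1) - snd (\<gamma> 0) - \<Omega> *v integral {0..1} (\<lambda>t. snd (\<gamma> t))) (at 0)"
    by (rule affine_cocycle_has_derivative[OF continuous_on_snd[OF cont] dR])
      (simp add: hom pose_mult_def)
  with dR show ?thesis by (rule that)
qed

section \<open>Infinitesimal rotations\<close>

lemma orthogonal_matrix_inner:
  fixes A :: "real^'n^'n"
  assumes "orthogonal_matrix A"
  shows "(A *v x) \<bullet> (A *v y) = x \<bullet> y"
  using assms orthogonal_transformation_matrix[of "(*v) A"]
  by (simp add: orthogonal_transformation_def matrix_of_matrix_vector_mul)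

lemma orthogonal_matrix_curve_derivative_skew:
  fixes R :: "real \<Rightarrow> real^'n^'n"
  assumes dR: "(R has_vector_derivative \<Omega>) (at 0)" and R0: "R 0 = mat 1"
    and orth: "\<And>t. orthogonal_matrix (R t)"
  shows "transpose \<Omega> = - \<Omega>"
proof -
  have dRx: "((\<lambda>t. R t *v x) has_derivative (\<lambda>h. h *\<^sub>R (\<Omega> *v x))) (at 0)" for x
    using bounded_linear.has_vector_derivative[OF bounded_linear_matrix_vector_mult_left dR]
    by (simp add: has_vector_derivative_def)
  have "(\<Omega> *v x) \<bullet> y + x \<bullet> (\<Omega> *v y) = 0" for x y
  proof -
    have "((\<lambda>t. (R t *v x) \<bullet> (R t *v y)) has_derivative
        (\<lambda>h. (R 0 *v x) \<bullet> (h *\<^sub>R (\<Omega> *v y)) + (h *\<^sub>R (\<Omega> *v x)) \<bullet> (R 0 *v y))) (at 0)"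
      by (rule has_derivative_inner[OF dRx dRx])
    moreover have "((\<lambda>t. (R t *v x) \<bullet> (R t *v y)) has_derivative (\<lambda>h. 0)) (at 0)"
      by (simp add: orthogonal_matrix_inner[OF orth])
    ultimately have "(\<lambda>h. (R 0 *v x) \<bullet> (h *\<^sub>R (\<Omega> *v y)) + (h *\<^sub>R (\<Omega> *v x)) \<bullet> (R 0 *v y))
        = (\<lambda>h. 0)"
      by (rule has_derivative_unique)
    from fun_cong[OF this, of 1] show ?thesis by (simp add: R0 add.commute)
  qed
  from this[of "axis j 1" "axis i 1" for i j] show ?thesis
    by (simp add: vec_eq_iff transpose_def inner_axis inner_axis' matrix_vector_mult_basis
        column_def eq_neg_iff_add_eq_0)
qed

lemma skew_mult_vec [simp]: "skew x *v y = cross3 x y"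
  by (simp add: vec_eq_iff forall_3 skew_def matrix_vector_mult_def sum_3 cross3_simps axis_def)

lemma skew_scaleR: "skew (c *\<^sub>R x) = c *\<^sub>R skew x"
  by (simp add: skew_def vec_eq_iff cross_mult_left)

lemma skew_symmetric_eq_skew:
  fixes \<Omega> :: "real^3^3"
  assumes "transpose \<Omega> = - \<Omega>"
  shows "\<Omega> = skew (vector [\<Omega>$3$2, \<Omega>$1$3, \<Omega>$2$1])"
proof -
  have anti: "\<Omega> $ i $ j = - \<Omega> $ j $ i" for i j
    using arg_cong[OF assms, of "\<lambda>A. A $ j $ i"] by (simp add: transpose_def)
  then have "\<Omega> $ i $ i = 0" for i by (metis neg_equal_zero)
  then show ?thesis
    using anti[of 1 2] anti[of 1 3] anti[of 2 3]
    by (simp add: vec_eq_iff forall_3 skew_def cross3_simps axis_def)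
qed

lemma rotation_generator_fixing_axis:
  fixes R :: "real \<Rightarrow> real^3^3"
  assumes dR: "(R has_vector_derivative \<Omega>) (at 0)" and R0: "R 0 = mat 1"
    and orth: "\<And>t. orthogonal_matrix (R t)" and axis: "\<And>t. R t *v g = g" and "g \<noteq> 0"
  obtains c where "\<Omega> = c *\<^sub>R skew g"
proof -
  define w :: "real^3" where "w = vector [\<Omega>$3$2, \<Omega>$1$3, \<Omega>$2$1]"
  have \<Omega>: "\<Omega> = skew w"
    unfolding w_def by (rule skew_symmetric_eq_skew[OF orthogonal_matrix_curve_derivative_skew[OF dR R0 orth]])
  have "((\<lambda>t. R t *v g) has_vector_derivative \<Omega> *v g) (at 0)"
    by (rule bounded_linear.has_vector_derivative[OF bounded_linear_matrix_vector_mult_left dR])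
  moreover have "((\<lambda>t. R t *v g) has_vector_derivative 0) (at 0)"
    by (simp add: axis)
  ultimately have "\<Omega> *v g = 0"
    by (rule vector_derivative_unique_at)
  then have "cross3 g w = 0" by (simp add: \<Omega> cross_skew[of g])
  then have "collinear {0, g, w}" by (simp add: cross_eq_0)
  then obtain c where "w = c *\<^sub>R g"
    using \<open>g \<noteq> 0\<close> collinear_lemma by (metis scale_zero_left)
  then have "\<Omega> = c *\<^sub>R skew g"
    by (simp add: \<Omega> skew_scaleR)
  then show ?thesis by (rule that)
qed

section \<open>The null space of N_g\<close>

lemma subspace_null_Ng: "subspace (null_Ng RE n N)"
  by (auto simp: subspace_def null_Ng_def matrix_vector_right_distrib inner_add_right
      matrix_vector_mult_scaleR)

lemma null_Ng_inner_eq: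
  assumes t: "t \<in> null_Ng RE n N" and "k \<in> {1..N}" "l \<in> {1..N}"
  shows "n k \<bullet> (RE *v t) = n l \<bullet> (RE *v t)"
proof -
  have "n k \<bullet> (RE *v t) = n 1 \<bullet> (RE *v t)" if "k \<in> {1..N}" for k
    using that
  proof (induction k)
    case (Suc k)
    show ?case
    proof (cases "k = 0")
      case False
      then have "Suc k \<in> {2..N}" using Suc.prems by auto
      then have "(n (Suc k) - n k) \<bullet> (RE *v t) = 0"
        using t unfolding null_Ng_def by fastforce
      with Suc False show ?thesis by (simp add: inner_diff_left)
    qed simp
  qed simp
  with assms show ?thesis by metis
qed

lemma null_Ng_has_vector_derivative:
  assumes d: "(p has_vector_derivative b) (at 0)" and p: "\<And>t. p t \<in> null_Ng RE n N"
  shows "b \<in> null_Ng RE n N"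
  unfolding null_Ng_def
proof (intro CollectI ballI)
  fix j assume j: "j \<in> {2..N}"
  let ?L = "\<lambda>y. (n j - n (j - 1)) \<bullet> (RE *v y)"
  have "bounded_linear ?L"
    by (rule bounded_linear_compose[OF bounded_linear_inner_right matrix_vector_mul_bounded_linear])
  from bounded_linear.has_vector_derivative[OF this d]
  have "((\<lambda>t. ?L (p t)) has_vector_derivative ?L b) (at 0)" .
  moreover have "((\<lambda>t. ?L (p t)) has_vector_derivative 0) (at 0)"
    using p j by (simp add: null_Ng_def)
  ultimately show "?L b = 0" by (rule vector_derivative_unique_at)
qed

lemma SOg2_semidir_null_subset_SE3: "SOg2_semidir_null g V \<subseteq> SE3"
  by (auto simp: SOg2_semidir_null_def SOg2_def SE3_def)

lemma translation_group_subset_SOg2_semidir_null: "translation_group V \<subseteq> SOg2_semidir_null g V"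
  by (auto simp: translation_group_def SOg2_semidir_null_def SOg2_def rotation_matrix_def
      orthogonal_matrix_id det_I)

lemma translation_group_nontrivial:
  assumes "dim V > 0"
  shows "\<exists>s\<in>translation_group V. s \<noteq> pose_id"
proof -
  have "\<not> V \<subseteq> {0}"
  proof
    assume "V \<subseteq> {0}"
    then have "dim V = 0" by (rule dim_eq_0[THEN iffD2])
    with assms show False by linarith
  qed
  then obtain z where "z \<in> V" "z \<noteq> 0" by blast
  then show ?thesis by (auto simp: translation_group_def pose_id_def)
qed

lemma one_param_subgroup_tangent_in_null_Ng:
  assumes op: "one_param_subgroup pose_mult H \<gamma>" and "g \<noteq> 0"
    and H: "H = SOg2_semidir_null g (null_Ng RE n N)
        \<and> skew g *v x \<in> null_Ng RE n N \<and> skew g *v y \<in> null_Ng RE n N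
      \<or> H = translation_group (null_Ng RE n N)"
    and dR: "((\<lambda>t. fst (\<gamma> t)) has_vector_derivative \<Omega>) (at 0)"
    and dp: "((\<lambda>t. snd (\<gamma> t)) has_vector_derivative b) (at 0)"
  shows "\<Omega> *v x + b \<in> null_Ng RE n N \<and> \<Omega> *v y \<in> null_Ng RE n N"
proof -
  let ?V = "null_Ng RE n N"
  have "H \<subseteq> SOg2_semidir_null g ?V"
    using H translation_group_subset_SOg2_semidir_null by blast
  have \<gamma>: "rotation_matrix (fst (\<gamma> t)) \<and> fst (\<gamma> t) *v g = g \<and> snd (\<gamma> t) \<in> ?V" for t
  proof -
    have "\<gamma> t \<in> SOg2_semidir_null g ?V"
      using op \<open>H \<subseteq> SOg2_semidir_null g ?V\<close> by (auto simp: one_param_subgroup_def)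
    then show ?thesis by (cases "\<gamma> t") (simp add: SOg2_semidir_null_def SOg2_def)
  qed
  then have "b \<in> ?V" by (intro null_Ng_has_vector_derivative[OF dp]) blast
  have "H \<subseteq> SE3"
    using \<open>H \<subseteq> SOg2_semidir_null g ?V\<close> SOg2_semidir_null_subset_SE3 by blast
  then have R0: "fst (\<gamma> 0) = mat 1"
    using one_param_subgroup_SE3_zero[OF op] by (simp add: pose_id_def)
  show ?thesis
    using H
  proof (elim disjE conjE)
    assume "skew g *v x \<in> ?V" "skew g *v y \<in> ?V"
    obtain c where "\<Omega> = c *\<^sub>R skew g"
      using rotation_generator_fixing_axis[OF dR R0 _ _ \<open>g \<noteq> 0\<close>] \<gamma>
      by (auto simp: rotation_matrix_def)
    with \<open>skew g *v x \<in> ?V\<close> \<open>skew g *v y \<in> ?V\<close> \<open>b \<in> ?V\<close> show ?thesis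
      by (simp add: scaleR_matrix_vector_assoc[symmetric] subspace_add subspace_scale subspace_null_Ng)
  next
    assume "H = translation_group ?V"
    then have \<gamma>_tr: "\<gamma> t \<in> translation_group ?V" for t
      using op by (simp add: one_param_subgroup_def)
    have "fst (\<gamma> t) = mat 1" for t
      using \<gamma>_tr[of t] by (auto simp: translation_group_def)
    then have "((\<lambda>t. fst (\<gamma> t)) has_vector_derivative 0) (at 0)" by simp
    with dR have "\<Omega> = 0" by (rule vector_derivative_unique_at)
    with \<open>b \<in> ?V\<close> show ?thesis by (simp add: subspace_0[OF subspace_null_Ng])
  qed
qed

section \<open>Invariance of the dynamics\<close>

lemma vec_lambda_add: "(\<chi> i. f i) + (\<chi> i. g i) = (\<chi> i. f i + g i)"
  by (simp add: vec_eq_iff)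

lemma vec_lambda_scaleR: "c *\<^sub>R (\<chi> i. f i) = (\<chi> i. c *\<^sub>R f i)"
  by (simp add: vec_eq_iff)

lemma gvio_act_pushforward_dynamics:
  fixes x :: "('c::finite, 'f::finite) gvio_state"
  assumes orth: "orthogonal_matrix R" and fixes_g: "R *v g = g"
  shows "\<exists>D. (gvio_act (R, p) has_derivative D) (at x) \<and>
    D (gvio_f g x u) = gvio_f g (gvio_act (R, p) x) u"
proof -
  let ?T = "transpose R"
  define D :: "('c, 'f) gvio_state \<Rightarrow> ('c, 'f) gvio_state" where
    "D = (\<lambda>(Ti, v, Tc, pf). ((?T ** fst Ti, ?T *v snd Ti), ?T *v v,
          (\<chi> m. (?T ** fst (Tc$m), ?T *v snd (Tc$m))), (\<chi> j. ?T *v (pf$j))))"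
  define c :: "('c, 'f) gvio_state" where
    "c = ((0, - (?T *v p)), 0, (\<chi> m. (0, - (?T *v p))), (\<chi> j. - (?T *v p)))"
  have act: "gvio_act (R, p) = (\<lambda>y. D y + c)"
    by (auto simp: fun_eq_iff gvio_act_def D_def c_def pose_mult_def pose_inv_def pose_apply_def
        vec_eq_iff matrix_vector_mult_diff_distrib split: prod.splits)
  have "linear D"
    by (rule linearI)
      (auto simp: D_def vec_lambda_add vec_lambda_scaleR matrix_add_ldistrib matrix_vector_right_distrib
        matrix_scalar_ac scalar_matrix_assoc matrix_vector_mult_scaleR
        simp del: transpose_matrix_vector split: prod.splits)
  then have "(gvio_act (R, p) has_derivative D) (at x)"
    unfolding act
    by (intro has_derivative_add_const bounded_linear_imp_has_derivative)
      (simp add: linear_conv_bounded_linear)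
  moreover have "D (gvio_f g x u) = gvio_f g (gvio_act (R, p) x) u"
  proof -
    have RT: "R ** ?T = mat 1" and "?T ** R = mat 1"
      using orth by (auto simp: orthogonal_matrix_def)
    \<comment> \<open>the gravity term is where the rotation must fix \<open>g\<close>\<close>
    then have Tg: "?T *v g = g"
      by (metis fixes_g matrix_vector_mul_assoc matrix_vector_mul_lid)
    have RT2: "A ** R ** ?T = A" for A :: "real^3^3"
      by (metis matrix_mul_assoc RT matrix_mul_rid)
    obtain Ti v Tc pf \<omega> a where "x = (Ti, v, Tc, pf)" "u = (\<omega>, a)" by (metis prod.exhaust)
    then show ?thesis
      by (simp add: D_def gvio_f_def gvio_act_def pose_mult_def pose_inv_def vec_eq_iff
          matrix_mul_assoc matrix_vector_mul_assoc matrix_transpose_mul RT Tg RT2 zero_prod_def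
          matrix_vector_right_distrib del: transpose_matrix_vector)
  qed
  ultimately show ?thesis by blast
qed

lemma SOg2_semidir_null_dynamics_invariant:
  fixes x :: "('c::finite, 'f::finite) gvio_state"
  assumes "s \<in> SOg2_semidir_null g V"
  shows "\<exists>D. (gvio_act s has_derivative D) (at x) \<and> D (gvio_f g x u) = gvio_f g (gvio_act s x) u"
  using assms gvio_act_pushforward_dynamics[of "fst s" g "snd s" x u]
  by (auto simp: SOg2_semidir_null_def SOg2_def rotation_matrix_def)

section \<open>Invariance of the observations\<close>

lemma pose_apply_inv_left_action:
  assumes "orthogonal_matrix R"
  shows "pose_apply (pose_inv (pose_mult (pose_inv (R, p)) T)) (pose_apply (pose_inv (R, p)) y)
       = pose_apply (pose_inv T) y"
proof -
  have "A ** R ** transpose R = A" for A :: "real^3^3"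
    using assms by (metis matrix_mul_assoc orthogonal_matrix_def matrix_mul_rid)
  then show ?thesis
    by (simp add: pose_apply_def pose_inv_def pose_mult_def matrix_transpose_mul
      matrix_vector_mul_assoc matrix_vector_right_distrib matrix_vector_mult_diff_distrib
      del: transpose_matrix_vector)
qed

lemma gvio_h_visual_act:
  fixes x :: "('c::finite, 'f::finite) gvio_state"
  assumes "orthogonal_matrix R"
  shows "gvio_h RE pE psat n (VisX m j) (gvio_act (R, p) x) = gvio_h RE pE psat n (VisX m j) x"
    and "gvio_h RE pE psat n (VisY m j) (gvio_act (R, p) x) = gvio_h RE pE psat n (VisY m j) x"
  by (simp_all add: gvio_h_def gvio_act_def pose_apply_inv_left_action[OF assms] split: prod.splits)

lemma gvio_h_PR: "gvio_h RE pE psat n (PR k l) x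
    = norm (pose_apply (RE, pE) (snd (fst x)) - psat k) - norm (pose_apply (RE, pE) (snd (fst x)) - psat l)"
  by (simp add: gvio_h_def split: prod.splits)

lemma gvio_h_Dop: "gvio_h RE pE psat n (Dop k l) x
    = - (n k \<bullet> (RE *v fst (snd x))) + n l \<bullet> (RE *v fst (snd x))"
  by (simp add: gvio_h_def split: prod.splits)

lemma pseudorange_has_real_derivative:
  assumes dq: "(q has_vector_derivative q') (at 0)"
    and ne: "psat k \<noteq> pose_apply (RE, pE) (q 0)"
    and nk: "n k = (psat k - pose_apply (RE, pE) (q 0)) /\<^sub>R norm (psat k - pose_apply (RE, pE) (q 0))"
  shows "((\<lambda>t. norm (pose_apply (RE, pE) (q t) - psat k)) has_real_derivative - (n k \<bullet> (RE *v q')))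
    (at 0)"
proof -
  have "((\<lambda>t. pose_apply (RE, pE) (q t) - psat k) has_vector_derivative RE *v q') (at 0)"
    unfolding pose_apply_def
    using bounded_linear.has_vector_derivative[OF matrix_vector_mul_bounded_linear dq]
    by (auto intro!: derivative_eq_intros)
  moreover have "sgn (pose_apply (RE, pE) (q 0) - psat k) = - n k"
    using nk by (simp add: sgn_div_norm norm_minus_commute scaleR_right_diff_distrib)
  ultimately show ?thesis
    using norm_curve_has_real_derivative[of _ "RE *v q'" 0] ne by (force simp: inner_commute)
qed

lemma pseudorange_difference_stationary:
  assumes dq: "(q has_vector_derivative d) (at 0)" and d: "d \<in> null_Ng RE n N"
    and kl: "k \<in> {1..N}" "l \<in> {1..N}"
    and ne: "\<forall>k\<in>{1..N}. psat k \<noteq> pose_apply (RE, pE) (q 0)"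
    and nk: "\<forall>k\<in>{1..N}. n k = (psat k - pose_apply (RE, pE) (q 0))
      /\<^sub>R norm (psat k - pose_apply (RE, pE) (q 0))"
  shows "((\<lambda>t. norm (pose_apply (RE, pE) (q t) - psat k) - norm (pose_apply (RE, pE) (q t) - psat l))
    has_real_derivative 0) (at 0)"
proof -
  have "((\<lambda>t. norm (pose_apply (RE, pE) (q t) - psat k) - norm (pose_apply (RE, pE) (q t) - psat l))
      has_real_derivative - (n k \<bullet> (RE *v d)) - - (n l \<bullet> (RE *v d))) (at 0)"
    using kl ne nk by (intro DERIV_diff pseudorange_has_real_derivative[OF dq]) auto
  with null_Ng_inner_eq[OF d kl] show ?thesis by simp
qed

lemma doppler_difference_stationary:
  assumes dw: "(w has_vector_derivative e) (at 0)" and e: "e \<in> null_Ng RE n N"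
    and kl: "k \<in> {1..N}" "l \<in> {1..N}"
  shows "((\<lambda>t. - (n k \<bullet> (RE *v w t)) + n l \<bullet> (RE *v w t)) has_real_derivative 0) (at 0)"
proof -
  have "bounded_linear (\<lambda>y. (n l - n k) \<bullet> (RE *v y))"
    by (rule bounded_linear_compose[OF bounded_linear_inner_right matrix_vector_mul_bounded_linear])
  from bounded_linear.has_vector_derivative[OF this dw]
  show ?thesis
    using null_Ng_inner_eq[OF e kl]
    by (simp add: has_real_derivative_iff_has_vector_derivative inner_diff_left)
qed

lemma gvio_act_pose_id: "gvio_act pose_id x = x"
  by (simp add: gvio_act_def pose_id_def pose_mult_def pose_inv_def pose_apply_def vec_eq_iff
      split: prod.splits)

lemma gvio_act_one_param_subgroup_has_derivative:
  fixes x0 :: "('c::finite, 'f::finite) gvio_state"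
  assumes op: "one_param_subgroup pose_mult H \<gamma>" and H: "H \<subseteq> SE3"
    and dR: "((\<lambda>t. fst (\<gamma> t)) has_vector_derivative \<Omega>) (at 0)"
    and dp: "((\<lambda>t. snd (\<gamma> t)) has_vector_derivative b) (at 0)"
  shows "((\<lambda>t. snd (fst (gvio_act (\<gamma> t) x0))) has_vector_derivative
      - (\<Omega> *v snd (fst x0) + b)) (at 0)"
    and "((\<lambda>t. fst (snd (gvio_act (\<gamma> t) x0))) has_vector_derivative
      - (\<Omega> *v fst (snd x0))) (at 0)"
proof -
  have inv: "pose_inv (\<gamma> t) = \<gamma> (- t)" for t
    by (rule one_param_subgroup_SE3_inverse[OF op H])
  then have "transpose (fst (\<gamma> t)) = fst (\<gamma> (- t))" for t
    by (metis fst_conv pose_inv_def)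
  with inv have eq: "(\<lambda>t. snd (fst (gvio_act (\<gamma> t) x0)))
      = (\<lambda>t. fst (\<gamma> (- t)) *v snd (fst x0) + snd (\<gamma> (- t)))"
    "(\<lambda>t. fst (snd (gvio_act (\<gamma> t) x0))) = (\<lambda>t. fst (\<gamma> (- t)) *v fst (snd x0))"
    by (simp_all add: fun_eq_iff gvio_act_def pose_mult_def del: transpose_matrix_vector
        split: prod.splits)
  have "((\<lambda>s. fst (\<gamma> s) *v snd (fst x0) + snd (\<gamma> s)) has_vector_derivative
      \<Omega> *v snd (fst x0) + b) (at (- 0))"
    by (auto intro!: derivative_eq_intros dp
        bounded_linear.has_vector_derivative[OF bounded_linear_matrix_vector_mult_left dR])
  then show "((\<lambda>t. snd (fst (gvio_act (\<gamma> t) x0))) has_vector_derivative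
      - (\<Omega> *v snd (fst x0) + b)) (at 0)"
    unfolding eq by (rule has_vector_derivative_mirror)
  have "((\<lambda>s. fst (\<gamma> s) *v fst (snd x0)) has_vector_derivative \<Omega> *v fst (snd x0)) (at (- 0))"
    using bounded_linear.has_vector_derivative[OF bounded_linear_matrix_vector_mult_left dR] by simp
  then show "((\<lambda>t. fst (snd (gvio_act (\<gamma> t) x0))) has_vector_derivative
      - (\<Omega> *v fst (snd x0))) (at 0)"
    unfolding eq by (rule has_vector_derivative_mirror)
qed

lemma gvio_h_stationary_along_one_param_subgroup:
  fixes x0 :: "('c::finite, 'f::finite) gvio_state"
  assumes op: "one_param_subgroup pose_mult H \<gamma>" and H: "H \<subseteq> SE3"
    and dR: "((\<lambda>t. fst (\<gamma> t)) has_vector_derivative \<Omega>) (at 0)"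
    and dp: "((\<lambda>t. snd (\<gamma> t)) has_vector_derivative b) (at 0)"
    and pos: "\<Omega> *v snd (fst x0) + b \<in> null_Ng RE n N"
    and vel: "\<Omega> *v fst (snd x0) \<in> null_Ng RE n N"
    and ne: "\<forall>k\<in>{1..N}. psat k \<noteq> pose_apply (RE, pE) (snd (fst x0))"
    and nk: "\<forall>k\<in>{1..N}. n k = (psat k - pose_apply (RE, pE) (snd (fst x0)))
      /\<^sub>R norm (psat k - pose_apply (RE, pE) (snd (fst x0)))"
    and i: "i \<in> gvio_obs_set N"
  shows "((\<lambda>t. gvio_h RE pE psat n i (gvio_act (\<gamma> t) x0)) has_real_derivative 0) (at 0)"
proof -
  have "orthogonal_matrix (fst (\<gamma> t))" for t
  proof -
    have "\<gamma> t \<in> SE3" using op H by (auto simp: one_param_subgroup_def)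
    then show ?thesis by (cases "\<gamma> t") (simp add: SE3_def rotation_matrix_def)
  qed
  from gvio_h_visual_act[OF this]
  have visual: "gvio_h RE pE psat n (VisX m j) (gvio_act (\<gamma> t) x0) = gvio_h RE pE psat n (VisX m j) x0"
    "gvio_h RE pE psat n (VisY m j) (gvio_act (\<gamma> t) x0) = gvio_h RE pE psat n (VisY m j) x0" for m j t
    by (metis prod.collapse)+
  show ?thesis
  proof (cases i)
    case (PR k l)
    then have "k \<in> {1..N}" "l \<in> {1..N}" using i by (auto simp: gvio_obs_set_def)
    moreover have "- (\<Omega> *v snd (fst x0) + b) \<in> null_Ng RE n N"
      using subspace_neg[OF subspace_null_Ng pos] .
    moreover have "snd (fst (gvio_act (\<gamma> 0) x0)) = snd (fst x0)"
      by (simp add: one_param_subgroup_SE3_zero[OF op H] gvio_act_pose_id)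
    ultimately show ?thesis
      using pseudorange_difference_stationary[OF gvio_act_one_param_subgroup_has_derivative(1)[OF op H dR dp, of x0],
          of RE n N k l psat pE] ne nk
      by (simp add: PR gvio_h_PR)
  next
    case (Dop k l)
    then have "k \<in> {1..N}" "l \<in> {1..N}" using i by (auto simp: gvio_obs_set_def)
    moreover have "- (\<Omega> *v fst (snd x0)) \<in> null_Ng RE n N"
      using subspace_neg[OF subspace_null_Ng vel] .
    ultimately show ?thesis
      using doppler_difference_stationary[OF gvio_act_one_param_subgroup_has_derivative(2)[OF op H dR dp, of x0]]
      by (simp add: Dop gvio_h_Dop)
  qed (simp_all add: visual)
qed

lemma gvio_h_stationary_under_symmetry:
  fixes x0 :: "('c::finite, 'f::finite) gvio_state"
  assumes op: "one_param_subgroup pose_mult H \<gamma>" and "g \<noteq> 0"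
    and H: "H = SOg2_semidir_null g (null_Ng RE n N)
        \<and> skew g *v snd (fst x0) \<in> null_Ng RE n N \<and> skew g *v fst (snd x0) \<in> null_Ng RE n N
      \<or> H = translation_group (null_Ng RE n N)"
    and ne: "\<forall>k\<in>{1..N}. psat k \<noteq> pose_apply (RE, pE) (snd (fst x0))"
    and nk: "\<forall>k\<in>{1..N}. n k = (psat k - pose_apply (RE, pE) (snd (fst x0)))
      /\<^sub>R norm (psat k - pose_apply (RE, pE) (snd (fst x0)))"
    and i: "i \<in> gvio_obs_set N"
  shows "((\<lambda>t. gvio_h RE pE psat n i (gvio_act (\<gamma> t) x0)) has_real_derivative 0) (at 0)"
proof -
  have "H \<subseteq> SE3"
    using H translation_group_subset_SOg2_semidir_null SOg2_semidir_null_subset_SE3 by blast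
  then obtain \<Omega> b where dR: "((\<lambda>t. fst (\<gamma> t)) has_vector_derivative \<Omega>) (at 0)"
      and dp: "((\<lambda>t. snd (\<gamma> t)) has_vector_derivative b) (at 0)"
    using one_param_subgroup_SE3_has_derivative[OF op] by blast
  have "\<Omega> *v snd (fst x0) + b \<in> null_Ng RE n N" "\<Omega> *v fst (snd x0) \<in> null_Ng RE n N"
    using one_param_subgroup_tangent_in_null_Ng[OF op \<open>g \<noteq> 0\<close> H dR dp] by auto
  with ne nk i show ?thesis
    by (intro gvio_h_stationary_along_one_param_subgroup[OF op \<open>H \<subseteq> SE3\<close> dR dp])
qed

theorem proposition2:
  fixes g :: "real^3" and RE :: "real^3^3" and pE :: "real^3"
    and psat n :: "nat \<Rightarrow> real^3" and N :: nat
    and x0 :: "('c::finite, 'f::finite) gvio_state"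
  assumes g_nz: "g \<noteq> 0"
    and RE_rot: "rotation_matrix RE"
    and x0_G: "x0 \<in> gvio_states"
    and recv_ne: "\<forall>k\<in>{1..N}. psat k \<noteq> pose_apply (RE, pE) (snd (fst x0))"
    and n_def: "\<forall>k\<in>{1..N}. n k = (psat k - pose_apply (RE, pE) (snd (fst x0)))
                      /\<^sub>R norm (psat k - pose_apply (RE, pE) (snd (fst x0)))"
    and null_pos: "dim (null_Ng RE n N) > 0"
  shows "(let H = (if skew g *v snd (fst x0) \<in> null_Ng RE n N
                     \<and> skew g *v fst (snd x0) \<in> null_Ng RE n N
                   then SOg2_semidir_null g (null_Ng RE n N)
                   else translation_group (null_Ng RE n N))
          in (\<exists>s\<in>H. s \<noteq> pose_id) \<and>
             inf_invariant (gvio_f g) (gvio_obs_set N) (gvio_h RE pE psat n)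
               gvio_act pose_mult H gvio_states x0)"
proof -
  define H where "H = (if skew g *v snd (fst x0) \<in> null_Ng RE n N
                     \<and> skew g *v fst (snd x0) \<in> null_Ng RE n N
                   then SOg2_semidir_null g (null_Ng RE n N)
                   else translation_group (null_Ng RE n N))"
  have H_cases: "H = SOg2_semidir_null g (null_Ng RE n N)
        \<and> skew g *v snd (fst x0) \<in> null_Ng RE n N \<and> skew g *v fst (snd x0) \<in> null_Ng RE n N
      \<or> H = translation_group (null_Ng RE n N)"
    by (simp add: H_def)
  then have "translation_group (null_Ng RE n N) \<subseteq> H"
    and H_sub: "H \<subseteq> SOg2_semidir_null g (null_Ng RE n N)"
    using translation_group_subset_SOg2_semidir_null by auto
  then have "\<exists>s\<in>H. s \<noteq> pose_id" using translation_group_nontrivial[OF null_pos] by blast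
  moreover have "inf_invariant (gvio_f g) (gvio_obs_set N) (gvio_h RE pE psat n)
      gvio_act pose_mult H gvio_states x0"
    unfolding inf_invariant_def
  proof (intro conjI ballI allI impI)
    fix \<gamma> and i :: "('c, 'f) gvio_obs"
    assume op: "one_param_subgroup pose_mult H \<gamma>" and i: "i \<in> gvio_obs_set N"
    show "((\<lambda>t. gvio_h RE pE psat n i (gvio_act (\<gamma> t) x0)) has_real_derivative 0) (at 0)"
      using op g_nz H_cases recv_ne n_def i by (rule gvio_h_stationary_under_symmetry)
  qed (use H_sub in \<open>blast intro: SOg2_semidir_null_dynamics_invariant\<close>)
  ultimately show ?thesis unfolding Let_def H_def by blast
qed

end
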